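(* Let $G$ and $H$ be finite groups and $k$ a positive integer such that $\mu(H)\subseteq\mu(G)$ and $|\mu(G)\setminus\mu(H)|<k$. Then $\omega(G^k)=\omega(G^{k-1}\times H)$, where $G^m$ denotes the direct product of $m$ copies of $G$.
   Context: For a finite group $X$, $\omega(X)$ is the set of orders of elements of $X$, and $\mu(X)$ is the set of elements of $\omega(X)$ that are maximal with respect to divisibility. *)

theory Defs
  imports "HOL-Algebra.Algebra" "HOL-Algebra.Product_Groups"
begin

definition element_orders :: "('a, 'b) monoid_scheme \<Rightarrow> nat set" where
  "element_orders Y = group.ord Y ` carrier Y"

definition max_element_orders :: "('a, 'b) monoid_scheme \<Rightarrow> nat set" where
  "max_element_orders Y =
     {n \<in> element_orders Y. \<forall>m \<in> element_orders Y. n dvd m \<longrightarrow> m = n}"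

definition power_group :: "('a, 'b) monoid_scheme \<Rightarrow> nat \<Rightarrow> (nat \<Rightarrow> 'a) monoid" where
  "power_group G m = product_group {..<m} (\<lambda>_. G)"

end

theory Submission
  imports Defs
begin

text \<open>
  Element orders of direct products are lcms of element orders of the factors, so the orders
  in \<open>G\<^sup>k\<close> are the lcms of at most \<open>k\<close> elements of \<open>\<omega>(G)\<close>, and those in
  \<open>G\<^bsup>k-1\<^esup> \<times> H\<close> are the numbers \<open>lcm l b\<close> with \<open>l\<close> an lcm of at most \<open>k - 1\<close> elements of
  \<open>\<omega>(G)\<close> and \<open>b \<in> \<omega>(H)\<close>. As \<open>\<mu>(H) \<subseteq> \<mu>(G)\<close>, every order of \<open>H\<close> divides an order of \<open>G\<close>,
  which gives one inclusion. Conversely, take \<open>k\<close> orders \<open>a\<^sub>i \<in> \<omega>(G)\<close> and maximal orders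
  \<open>m\<^sub>i \<in> \<mu>(G)\<close> with \<open>a\<^sub>i dvd m\<^sub>i\<close>. If some \<open>m\<^sub>i\<close> is an order of \<open>H\<close>, so is \<open>a\<^sub>i\<close>, and it
  can be split off as \<open>b\<close>. Otherwise all \<open>m\<^sub>i\<close> lie in \<open>\<mu>(G) - \<mu>(H)\<close>, which has fewer than
  \<open>k\<close> elements, so \<open>m\<^sub>i = m\<^sub>j\<close> for some \<open>i \<noteq> j\<close>; then \<open>lcm a\<^sub>i a\<^sub>j\<close> divides \<open>m\<^sub>i\<close>, hence is
  an order of \<open>G\<close>, and merging \<open>a\<^sub>i\<close> and \<open>a\<^sub>j\<close> frees a slot for \<open>b = 1\<close>.
\<close>

definition divisor_closed :: "nat set \<Rightarrow> bool" where
  "divisor_closed A \<longleftrightarrow> (\<forall>a\<in>A. \<forall>d. d dvd a \<longrightarrow> d \<in> A)"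

definition Lcm_combinations :: "nat set \<Rightarrow> nat \<Rightarrow> nat set" where
  "Lcm_combinations W n = {Lcm S | S. finite S \<and> S \<subseteq> W \<and> card S \<le> n}"

lemma Lcm_combinations_eq_Lcm_tuples:
  assumes "1 \<in> W"
  shows "Lcm_combinations W m = {Lcm (a ` {..<m}) | a. \<forall>i\<in>{..<m}. a i \<in> W}"
proof (intro equalityI subsetI)
  fix x assume "x \<in> Lcm_combinations W m"
  then obtain S where S: "finite S" "S \<subseteq> W" "card S \<le> m" and x: "x = Lcm S"
    unfolding Lcm_combinations_def by blast
  obtain f where f: "bij_betw f {..<card S} S"
    using ex_bij_betw_nat_finite[OF \<open>finite S\<close>] by (auto simp: lessThan_atLeast0)
  define a where "a i = (if i < card S then f i else 1)" for i
  have "a ` {..<card S} = f ` {..<card S}"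
    by (rule image_cong) (simp_all add: a_def)
  then have "a ` {..<card S} = S"
    using f by (simp add: bij_betw_def)
  moreover have "{..<m} = {..<card S} \<union> {card S..<m}"
    using S(3) by auto
  ultimately have "a ` {..<m} = S \<union> a ` {card S..<m}"
    by (metis image_Un)
  moreover have "Lcm (a ` {card S..<m}) = 1"
    unfolding Lcm_1_iff by (simp add: a_def)
  ultimately have "Lcm (a ` {..<m}) = x"
    by (simp add: x Lcm_Un)
  moreover have "\<forall>i\<in>{..<m}. a i \<in> W"
    using f S(2) assms by (auto simp: a_def bij_betw_def)
  ultimately show "x \<in> {Lcm (a ` {..<m}) | a. \<forall>i\<in>{..<m}. a i \<in> W}"
    by blast
next
  fix x assume "x \<in> {Lcm (a ` {..<m}) | a. \<forall>i\<in>{..<m}. a i \<in> W}"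
  then obtain a where "\<forall>i\<in>{..<m}. a i \<in> W" "x = Lcm (a ` {..<m})"
    by blast
  then show "x \<in> Lcm_combinations W m"
    unfolding Lcm_combinations_def using card_image_le[of "{..<m}" a] by fastforce
qed

lemma Lcm_merge_pair:
  fixes S :: "'a::semiring_Gcd set"
  assumes "finite S" "s \<in> S" "t \<in> S" "s \<noteq> t"
  shows "Lcm (insert (lcm s t) (S - {s, t})) = Lcm S"
    and "card (insert (lcm s t) (S - {s, t})) < card S"
proof -
  have S: "insert s (insert t (S - {s, t})) = S"
    using assms by auto
  have "Lcm (insert (lcm s t) (S - {s, t})) = Lcm (insert s (insert t (S - {s, t})))"
    by (simp add: lcm.assoc)
  then show "Lcm (insert (lcm s t) (S - {s, t})) = Lcm S"
    unfolding S .
  have "card (insert (lcm s t) (S - {s, t})) \<le> Suc (card (S - {s, t}))"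
    using assms(1) by (simp add: card_insert_if)
  also have "\<dots> < card S"
    using assms(1,4) by (subst S[symmetric]) simp
  finally show "card (insert (lcm s t) (S - {s, t})) < card S" .
qed

lemma Lcm_split_off:
  fixes W V M :: "nat set"
  assumes S: "finite S" "S \<subseteq> W" "card S \<le> Suc n"
    and W: "divisor_closed W" and V: "divisor_closed V" "1 \<in> V"
    and M: "M \<subseteq> W" "\<And>w. w \<in> W \<Longrightarrow> \<exists>m\<in>M. w dvd m"
    and MV: "finite (M - V)" "card (M - V) \<le> n"
  obtains S' b where "finite S'" "S' \<subseteq> W" "card S' \<le> n" "b \<in> V" "Lcm S = lcm (Lcm S') b"
proof -
  have "\<forall>s\<in>S. \<exists>m\<in>M. s dvd m"
    using M(2) S(2) by blast
  then obtain m where m: "\<And>s. s \<in> S \<Longrightarrow> m s \<in> M \<and> s dvd m s"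
    by metis
  consider "card S \<le> n" | s where "s \<in> S" "m s \<in> V"
    | s t where "s \<in> S" "t \<in> S" "s \<noteq> t" "m s = m t"
  proof (cases "card S \<le> n \<or> (\<exists>s\<in>S. m s \<in> V)")
    case False
    then have "card (M - V) < card S" "m ` S \<subseteq> M - V"
      using MV(2) m by auto
    then have "\<not> inj_on m S"
      using card_inj_on_le[OF _ _ MV(1), of m S] by linarith
    then show thesis
      using that(3) unfolding inj_on_def by blast
  qed (use that in blast)+
  then show thesis
  proof cases
    case 1
    then show thesis
      using that[of S 1] S V(2) by simp
  next
    case (2 s)
    have "s \<in> V"
      using V(1) m[OF \<open>s \<in> S\<close>] \<open>m s \<in> V\<close> unfolding divisor_closed_def by blast
    moreover have "Lcm S = lcm (Lcm (S - {s})) s"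
      using \<open>s \<in> S\<close> by (metis Lcm_insert insert_Diff lcm.commute)
    moreover have "card (S - {s}) \<le> n"
      using S \<open>s \<in> S\<close> by simp
    ultimately show thesis
      using that[of "S - {s}" s] S by blast
  next
    case (3 s t)
    have "lcm s t dvd m s"
      using m 3 by (metis lcm_least)
    then have "lcm s t \<in> W"
      using W M(1) m[OF \<open>s \<in> S\<close>] unfolding divisor_closed_def by blast
    then show thesis
      using that[of "insert (lcm s t) (S - {s, t})" 1] Lcm_merge_pair[OF S(1) 3(1-3)] S V(2) by auto
  qed
qed

lemma Lcm_combinations_Suc:
  fixes W V M :: "nat set"
  assumes W: "divisor_closed W" and V: "divisor_closed V" "1 \<in> V" "V \<subseteq> W"
    and M: "M \<subseteq> W" "\<And>w. w \<in> W \<Longrightarrow> \<exists>m\<in>M. w dvd m"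
    and MV: "finite (M - V)" "card (M - V) \<le> n"
  shows "Lcm_combinations W (Suc n) = {lcm l b | l b. l \<in> Lcm_combinations W n \<and> b \<in> V}"
proof (intro equalityI subsetI)
  fix x assume "x \<in> Lcm_combinations W (Suc n)"
  then obtain S where S: "finite S" "S \<subseteq> W" "card S \<le> Suc n" and x: "x = Lcm S"
    unfolding Lcm_combinations_def by blast
  obtain S' b where "finite S'" "S' \<subseteq> W" "card S' \<le> n" "b \<in> V" "Lcm S = lcm (Lcm S') b"
    using Lcm_split_off[OF S W V(1,2) M MV] .
  then show "x \<in> {lcm l b | l b. l \<in> Lcm_combinations W n \<and> b \<in> V}"
    unfolding Lcm_combinations_def x by blast
next
  fix x assume "x \<in> {lcm l b | l b. l \<in> Lcm_combinations W n \<and> b \<in> V}"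
  then obtain S b where S: "finite S" "S \<subseteq> W" "card S \<le> n" and "b \<in> V" "x = lcm (Lcm S) b"
    unfolding Lcm_combinations_def by blast
  then have "finite (insert b S) \<and> insert b S \<subseteq> W \<and> card (insert b S) \<le> Suc n \<and> x = Lcm (insert b S)"
    using V(3) by (auto simp: card_insert_if lcm.commute)
  then show "x \<in> Lcm_combinations W (Suc n)"
    unfolding Lcm_combinations_def by blast
qed

lemma pow_DirProd: "(x, y) [^]\<^bsub>G \<times>\<times> H\<^esub> (n::nat) = (x [^]\<^bsub>G\<^esub> n, y [^]\<^bsub>H\<^esub> n)"
  by (induction n) simp_all

lemma pow_product_group: "f [^]\<^bsub>product_group I G\<^esub> (n::nat) = (\<lambda>i\<in>I. f i [^]\<^bsub>G i\<^esub> n)"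
  by (induction n) (simp_all add: fun_eq_iff)

lemma ord_DirProd:
  assumes "group G" "group H" "x \<in> carrier G" "y \<in> carrier H"
  shows "group.ord (G \<times>\<times> H) (x, y) = lcm (group.ord G x) (group.ord H y)"
proof -
  interpret GH: group "G \<times>\<times> H"
    using assms(1,2) by (rule DirProd_group)
  have "(x, y) [^]\<^bsub>G \<times>\<times> H\<^esub> (n::nat) = \<one>\<^bsub>G \<times>\<times> H\<^esub> \<longleftrightarrow> lcm (group.ord G x) (group.ord H y) dvd n" for n
    using group.pow_eq_id[OF assms(1,3)] group.pow_eq_id[OF assms(2,4)] by (simp add: pow_DirProd)
  then show ?thesis
    using assms by (subst GH.ord_unique) auto
qed

lemma ord_product_group:
  assumes "\<And>i. i \<in> I \<Longrightarrow> group (G i)" "f \<in> carrier (product_group I G)"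
  shows "group.ord (product_group I G) f = Lcm ((\<lambda>i. group.ord (G i) (f i)) ` I)"
proof -
  interpret P: group "product_group I G"
    using assms(1) by (rule product_group)
  have "f [^]\<^bsub>product_group I G\<^esub> (n::nat) = \<one>\<^bsub>product_group I G\<^esub>
          \<longleftrightarrow> (\<forall>i\<in>I. f i [^]\<^bsub>G i\<^esub> n = \<one>\<^bsub>G i\<^esub>)" for n
    by (auto simp: pow_product_group restrict_def fun_eq_iff)
  also have "\<dots> n \<longleftrightarrow> Lcm ((\<lambda>i. group.ord (G i) (f i)) ` I) dvd n" for n
    using assms group.pow_eq_id by (fastforce simp: Lcm_dvd_iff PiE_iff)
  finally show ?thesis
    using P.ord_unique[OF assms(2)] by blast
qed

lemma element_orders_DirProd:
  assumes "group G" "group H"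
  shows "element_orders (G \<times>\<times> H) = {lcm a b | a b. a \<in> element_orders G \<and> b \<in> element_orders H}"
proof (intro equalityI subsetI)
  fix x assume "x \<in> element_orders (G \<times>\<times> H)"
  then obtain u v where "u \<in> carrier G" "v \<in> carrier H" "x = group.ord (G \<times>\<times> H) (u, v)"
    unfolding element_orders_def by auto
  then show "x \<in> {lcm a b | a b. a \<in> element_orders G \<and> b \<in> element_orders H}"
    unfolding element_orders_def using ord_DirProd[OF assms] by blast
next
  fix x assume "x \<in> {lcm a b | a b. a \<in> element_orders G \<and> b \<in> element_orders H}"
  then obtain u v where uv: "u \<in> carrier G" "v \<in> carrier H"
    and "x = lcm (group.ord G u) (group.ord H v)"
    unfolding element_orders_def by auto
  then have "x = group.ord (G \<times>\<times> H) (u, v)"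
    using ord_DirProd[OF assms uv] by simp
  then show "x \<in> element_orders (G \<times>\<times> H)"
    unfolding element_orders_def using uv by auto
qed

lemma element_orders_product_group:
  assumes "\<And>i. i \<in> I \<Longrightarrow> group (G i)"
  shows "element_orders (product_group I G)
           = {Lcm (a ` I) | a. \<forall>i\<in>I. a i \<in> element_orders (G i)}"
proof (intro equalityI subsetI)
  fix x assume "x \<in> element_orders (product_group I G)"
  then obtain f where "f \<in> carrier (product_group I G)" "x = group.ord (product_group I G) f"
    unfolding element_orders_def by blast
  then show "x \<in> {Lcm (a ` I) | a. \<forall>i\<in>I. a i \<in> element_orders (G i)}"
    using ord_product_group[OF assms] by (fastforce simp: element_orders_def PiE_iff)
next
  fix x assume "x \<in> {Lcm (a ` I) | a. \<forall>i\<in>I. a i \<in> element_orders (G i)}"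
  then obtain a where a: "\<forall>i\<in>I. a i \<in> element_orders (G i)" and x: "x = Lcm (a ` I)"
    by blast
  then have "\<forall>i\<in>I. \<exists>g\<in>carrier (G i). group.ord (G i) g = a i"
    unfolding element_orders_def by (metis imageE)
  then obtain g where g: "\<And>i. i \<in> I \<Longrightarrow> g i \<in> carrier (G i) \<and> group.ord (G i) (g i) = a i"
    by metis
  have f: "restrict g I \<in> carrier (product_group I G)"
    using g by simp
  have "group.ord (product_group I G) (restrict g I)
          = Lcm ((\<lambda>i. group.ord (G i) (restrict g I i)) ` I)"
    by (rule ord_product_group[OF assms f])
  also have "\<dots> = x"
    unfolding x using g by (intro arg_cong[where f = Lcm] image_cong) auto
  finally have "group.ord (product_group I G) (restrict g I) = x" .
  then show "x \<in> element_orders (product_group I G)"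
    using f unfolding element_orders_def by blast
qed

lemma one_in_element_orders: "group G \<Longrightarrow> 1 \<in> element_orders G"
  unfolding element_orders_def by (metis group.ord_id image_eqI monoid.one_closed group.is_monoid)

lemma element_orders_power_group:
  assumes "group G"
  shows "element_orders (power_group G m) = Lcm_combinations (element_orders G) m"
  unfolding power_group_def element_orders_product_group[OF assms]
    Lcm_combinations_eq_Lcm_tuples[OF one_in_element_orders[OF assms]] ..

lemma finite_element_orders: "finite (carrier G) \<Longrightarrow> finite (element_orders G)"
  unfolding element_orders_def by simp

lemma max_element_orders_subset: "max_element_orders G \<subseteq> element_orders G"
  unfolding max_element_orders_def by blast

lemma element_orders_pos:
  assumes "group G" "finite (carrier G)" "n \<in> element_orders G"
  shows "n > 0"
  using assms group.ord_ge_1 unfolding element_orders_def by fastforce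

lemma divisor_closed_element_orders:
  assumes "group G" "finite (carrier G)"
  shows "divisor_closed (element_orders G)"
  unfolding divisor_closed_def
proof (intro ballI allI impI)
  fix n d assume n: "n \<in> element_orders G" and "d dvd n"
  then obtain e where e: "n = d * e"
    by blast
  obtain x where x: "x \<in> carrier G" "n = group.ord G x"
    using n unfolding element_orders_def by blast
  have "e \<noteq> 0"
    using e element_orders_pos[OF assms n] by auto
  then have "group.ord G (x [^]\<^bsub>G\<^esub> e) = d"
    using group.ord_pow[OF assms(1) x(1), of e] x e by (metis dvd_triv_right nonzero_mult_div_cancel_right)
  moreover have "x [^]\<^bsub>G\<^esub> e \<in> carrier G"
    using x(1) assms(1) by (simp add: group.is_monoid monoid.nat_pow_closed)
  ultimately show "d \<in> element_orders G"
    unfolding element_orders_def by (metis image_eqI)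
qed

lemma dvd_max_element_order:
  assumes "group G" "finite (carrier G)" "n \<in> element_orders G"
  shows "\<exists>m\<in>max_element_orders G. n dvd m"
proof -
  \<comment> \<open>The largest multiple of \<open>n\<close> in \<open>\<omega>(G)\<close> is maximal for divisibility, as all orders are positive.\<close>
  define S where "S = {m \<in> element_orders G. n dvd m}"
  have S: "finite S" "n \<in> S"
    using finite_element_orders[OF assms(2)] assms(3) by (simp_all add: S_def)
  have "Max S \<in> S"
    using S by (intro Max_in) auto
  moreover have "m = Max S" if "m \<in> element_orders G" "Max S dvd m" for m
  proof (rule antisym)
    show "m \<le> Max S"
      using S \<open>Max S \<in> S\<close> that by (intro Max_ge) (auto simp: S_def intro: dvd_trans)
    show "Max S \<le> m"
      using that element_orders_pos[OF assms(1,2)] by (simp add: dvd_imp_le)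
  qed
  ultimately show ?thesis
    unfolding max_element_orders_def S_def by blast
qed

lemma element_orders_subset_if_max_element_orders_subset:
  assumes "group G" "finite (carrier G)" "group H" "finite (carrier H)"
    and "max_element_orders H \<subseteq> max_element_orders G"
  shows "element_orders H \<subseteq> element_orders G"
proof
  fix n assume "n \<in> element_orders H"
  then obtain m where "m \<in> max_element_orders H" "n dvd m"
    using dvd_max_element_order[OF assms(3,4)] by blast
  then show "n \<in> element_orders G"
    using assms(5) max_element_orders_subset divisor_closed_element_orders[OF assms(1,2)]
    unfolding divisor_closed_def by blast
qed

theorem lemma3p1:
  fixes G :: "('a, 'c) monoid_scheme" and H :: "('b, 'd) monoid_scheme" and k :: nat
  assumes "group G" and "finite (carrier G)"
    and "group H" and "finite (carrier H)"
    and "k > 0"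
    and "max_element_orders H \<subseteq> max_element_orders G"
    and "card (max_element_orders G - max_element_orders H) < k"
  shows "element_orders (power_group G k)
           = element_orders (power_group G (k - 1) \<times>\<times> H)"
proof -
  obtain n where k: "k = Suc n"
    using \<open>k > 0\<close> gr0_implies_Suc by blast
  have HG: "element_orders H \<subseteq> element_orders G"
    using element_orders_subset_if_max_element_orders_subset assms(1-4,6) .
  have sub: "max_element_orders G - element_orders H \<subseteq> max_element_orders G - max_element_orders H"
    using max_element_orders_subset by blast
  have fin: "finite (max_element_orders G - max_element_orders H)"
    using finite_element_orders[OF assms(2)] max_element_orders_subset by (blast intro: finite_subset)
  then have "finite (max_element_orders G - element_orders H)"
    using sub by (rule finite_subset[rotated])
  moreover have "card (max_element_orders G - element_orders H) \<le> n"
    using card_mono[OF fin sub] assms(7) k by simp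
  moreover have "group (power_group G n)"
    unfolding power_group_def using assms(1) by simp
  ultimately show ?thesis
    unfolding k diff_Suc_1 element_orders_power_group[OF assms(1)]
      element_orders_DirProd[OF \<open>group (power_group G n)\<close> assms(3)]
    using Lcm_combinations_Suc[OF divisor_closed_element_orders[OF assms(1,2)]
        divisor_closed_element_orders[OF assms(3,4)] one_in_element_orders[OF assms(3)] HG
        max_element_orders_subset dvd_max_element_order[OF assms(1,2)]]
    by simp
qed

end
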